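(* Consider the Axelrod model with $F$ features and $q$ states on the path with vertex set $\{0,1,\dots,N\}$ (so $N$ edges), started with all initial features i.i.d. uniform on $\{1,\dots,q\}$, and the coupled urn process $(B_0(t),\dots,B_F(t))$ defined below. Then almost surely, for all $t\ge0$, $$B_0(t)\le w_0(t).$$
   Context: For an edge $e=\{x,y\}$, $\bar X_t(e)=\sum_{i=1}^F\mathbf 1\{X_t^i(x)=X_t^i(y)\}$, $w_j(t)=\#\{e:\bar X_t(e)=j\}$, and the total number of agreements is $W(t)=\sum_{j=0}^F j\,w_j(t)$. Axelrod dynamics: for each ordered pair $(x,y)$ of adjacent vertices with $X(x)\ne X(y)$, at rate $F(x,y)/2$ (with $F(x,y)=\bar X(\{x,y\})/F$) vertex $x$ copies from $y$ one feature chosen uniformly among those on which they differ; each such update changes $W$ by $0$, $1$ or $2$. Urn process: there are $F+1$ boxes labelled $0,\dots,F$ with $B_j(0)=w_j(0)$ balls in box $j$. At each time $t$ at which the Axelrod model is updated: if $W(t)-W(t-)\le1$, nothing is done; if $W(t)-W(t-)=2$, a box $j$ is chosen uniformly at random among the nonempty boxes with $1\le j\le F-1$ (if there is one) and one ball is moved from box $j$ to box $j+1$; in case a ball has been so moved, additionally one ball is moved from box $0$ to box $1$ if box $0$ is nonempty. The urn stops when the Axelrod model reaches an absorbing state. *)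

theory Defs
  imports Main
begin

text \<open>Axelrod model on the path with vertices 0..N (edges {v, v+1}, v < N).
  A configuration is X :: nat => nat => nat, X v i = value of feature i (i < F)
  at vertex v.  Urn state is B :: nat => nat, B j = number of balls in box j (j \<le> F).\<close>

definition agr :: "nat \<Rightarrow> (nat \<Rightarrow> nat \<Rightarrow> nat) \<Rightarrow> nat \<Rightarrow> nat \<Rightarrow> nat" where
  "agr F X x y = card {i. i < F \<and> X x i = X y i}"

definition wcount :: "nat \<Rightarrow> nat \<Rightarrow> (nat \<Rightarrow> nat \<Rightarrow> nat) \<Rightarrow> nat \<Rightarrow> nat" where
  "wcount F N X j = card {v. v < N \<and> agr F X v (Suc v) = j}"

definition Wtot :: "nat \<Rightarrow> nat \<Rightarrow> (nat \<Rightarrow> nat \<Rightarrow> nat) \<Rightarrow> nat" where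
  "Wtot F N X = (\<Sum>j\<le>F. j * wcount F N X j)"

definition adjacent :: "nat \<Rightarrow> nat \<Rightarrow> nat \<Rightarrow> bool" where
  "adjacent N x y \<longleftrightarrow> x \<le> N \<and> y \<le> N \<and> (y = Suc x \<or> x = Suc y)"

text \<open>One Axelrod update with positive rate: adjacent x, y with at least one
  agreement (rate F(x,y)/2 > 0) and a feature i on which they differ;
  x copies feature i from y.\<close>
definition axelrod_step :: "nat \<Rightarrow> nat \<Rightarrow> (nat \<Rightarrow> nat \<Rightarrow> nat) \<Rightarrow> (nat \<Rightarrow> nat \<Rightarrow> nat) \<Rightarrow> bool" where
  "axelrod_step F N X X' \<longleftrightarrow>
     (\<exists>x y i. adjacent N x y \<and> agr F X x y > 0 \<and> i < F \<and> X x i \<noteq> X y i \<and>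
              X' = X(x := (X x)(i := X y i)))"

text \<open>One urn move corresponding to an Axelrod update whose change of W is dW.\<close>
definition urn_step :: "nat \<Rightarrow> int \<Rightarrow> (nat \<Rightarrow> nat) \<Rightarrow> (nat \<Rightarrow> nat) \<Rightarrow> bool" where
  "urn_step F dW B B' \<longleftrightarrow>
     (if dW \<le> 1 then B' = B
      else if \<not> (\<exists>j. 1 \<le> j \<and> j \<le> F - 1 \<and> B j > 0) then B' = B
      else (\<exists>j. 1 \<le> j \<and> j \<le> F - 1 \<and> B j > 0 \<and>
              (let B1 = B(j := B j - 1, Suc j := B (Suc j) + 1) in
                 B' = (if B1 0 > 0 then B1(0 := B1 0 - 1, 1 := B1 1 + 1) else B1))))"

end

theory Submission
  imports Defs
begin

(* The claim holds deterministically for every trajectory, by induction on the number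
   of updates, for the stronger invariant
       B_0 <= w_0,    sum_j B_j = N,    sum_j j * B_j <= W.
   Facts about one update of the Axelrod model: the copied feature raises the agreement
   of the updated edge e0 by one (and that edge had between 1 and F-1 agreements), it
   changes the agreement of at most one other edge by at most one, and leaves all other
   edges alone.  A general lemma on such local perturbations of a profile shows that W
   never decreases and that w_0 can only drop, by one, when W rises by two.  The mixed
   edge e0 moreover gives W < F (N - w_0); together with the invariant this forces a ball
   in one of the boxes 1..F-1, so a W-increment of two really moves balls in the urn,
   taking one ball out of box 0 when box 0 is nonempty. *)

abbreviation edge_agr :: "nat \<Rightarrow> (nat \<Rightarrow> nat \<Rightarrow> nat) \<Rightarrow> nat \<Rightarrow> nat" where
  "edge_agr F X v \<equiv> agr F X v (Suc v)"

lemma agr_le: "agr F X u w \<le> F"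
  unfolding agr_def by (rule order_trans[OF card_mono[of "{..<F}"]]) auto

lemma agr_less:
  assumes "i < F" "X u i \<noteq> X w i"
  shows "agr F X u w < F"
proof -
  have "{k. k < F \<and> X u k = X w k} \<subset> {..<F}" using assms by auto
  then show ?thesis unfolding agr_def by (metis card_lessThan finite_lessThan psubset_card_mono)
qed

lemma agr_sym: "agr F X u w = agr F X w u"
  unfolding agr_def by metis

lemma agr_update_other:
  assumes "u \<noteq> x" "w \<noteq> x"
  shows "agr F (X(x := g)) u w = agr F X u w"
  using assms unfolding agr_def by simp

lemma card_differ_in_one:
  assumes "S' - {i} = S - {i}" "finite S" "finite S'"
  shows "card S' \<le> Suc (card S)"
proof -
  have "card S' \<le> Suc (card (S' - {i}))"
    using assms(3) by (metis card_Diff_singleton_if card.remove le_SucI order_refl)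
  also have "card (S' - {i}) \<le> card S" using assms by (metis card_Diff1_le)
  finally show ?thesis by simp
qed

lemma agr_update_close:
  fixes X :: "nat \<Rightarrow> nat \<Rightarrow> nat" and x i c :: nat
  defines "X' \<equiv> X(x := (X x)(i := c))"
  shows "agr F X' u w \<le> Suc (agr F X u w)" and "agr F X u w \<le> Suc (agr F X' u w)"
proof -
  have same: "{k. k < F \<and> X' u k = X' w k} - {i} = {k. k < F \<and> X u k = X w k} - {i}"
    unfolding X'_def by auto
  show "agr F X' u w \<le> Suc (agr F X u w)"
    unfolding agr_def by (rule card_differ_in_one[OF same]) simp_all
  show "agr F X u w \<le> Suc (agr F X' u w)"
    unfolding agr_def by (rule card_differ_in_one[OF same[symmetric]]) simp_all
qed

lemma agr_copy:
  fixes X :: "nat \<Rightarrow> nat \<Rightarrow> nat"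
  assumes "x \<noteq> y" "i < F" "X x i \<noteq> X y i"
  shows "agr F (X(x := (X x)(i := X y i))) x y = Suc (agr F X x y)"
proof -
  have "{k. k < F \<and> (X(x := (X x)(i := X y i))) x k = (X(x := (X x)(i := X y i))) y k}
        = insert i {k. k < F \<and> X x k = X y k}"
    using assms by auto
  then show ?thesis unfolding agr_def using assms by simp
qed

lemma sum_by_value:
  fixes g :: "'a \<Rightarrow> nat" and h :: "nat \<Rightarrow> nat"
  assumes "finite A" "\<forall>v\<in>A. g v \<le> F"
  shows "(\<Sum>v\<in>A. h (g v)) = (\<Sum>j\<le>F. h j * card {v\<in>A. g v = j})"
proof -
  have "(\<Sum>v\<in>A. h (g v)) = (\<Sum>j\<in>g ` A. \<Sum>v\<in>{v\<in>A. g v = j}. h (g v))"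
    by (rule sum.image_gen[OF assms(1)])
  also have "\<dots> = (\<Sum>j\<in>g ` A. h j * card {v\<in>A. g v = j})"
    by (intro sum.cong) auto
  also have "\<dots> = (\<Sum>j\<le>F. h j * card {v\<in>A. g v = j})"
    by (rule sum.mono_neutral_left) (use assms in auto)
  finally show ?thesis .
qed

lemma Wtot_edge_sum: "Wtot F N X = (\<Sum>v<N. edge_agr F X v)"
  using sum_by_value[of "{..<N}" "edge_agr F X" F "\<lambda>j. j"]
  by (simp add: Wtot_def wcount_def agr_le)

lemma wcount_total: "(\<Sum>j\<le>F. wcount F N X j) = N"
  using sum_by_value[of "{..<N}" "edge_agr F X" F "\<lambda>_. 1"]
  by (simp add: wcount_def agr_le)

(* If some edge has between 1 and F-1 agreements, then W < F (N - w_0): every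
   edge with an agreement contributes at most F, and the mixed one less. *)
lemma Wtot_less_if_mixed_edge:
  assumes "e < N" "0 < edge_agr F X e" "edge_agr F X e < F"
  shows "Wtot F N X < F * (N - wcount F N X 0)"
proof -
  define P where "P = {v. v < N \<and> edge_agr F X v \<noteq> 0}"
  have "Wtot F N X = (\<Sum>v\<in>P. edge_agr F X v)"
    unfolding Wtot_edge_sum P_def by (rule sum.mono_neutral_right) auto
  also have "\<dots> < (\<Sum>v\<in>P. F)"
    by (rule sum_strict_mono_ex1) (use assms agr_le in \<open>auto simp: P_def\<close>)
  also have "\<dots> = F * card P" by simp
  also have "card P = N - wcount F N X 0"
  proof -
    have "{..<N} = P \<union> {v. v < N \<and> edge_agr F X v = 0}" unfolding P_def by auto
    then have "card {..<N} = card P + wcount F N X 0"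
      unfolding wcount_def by (simp add: card_Un_disjoint P_def disjoint_iff)
    then show ?thesis by simp
  qed
  finally show ?thesis .
qed

lemma local_perturbation:
  fixes a a' :: "'a \<Rightarrow> nat"
  assumes A: "finite A" "e0 \<in> A" and e1: "e1 \<noteq> e0"
    and up: "0 < a e0" "a' e0 = Suc (a e0)"
    and close: "a' e1 \<le> Suc (a e1)" "a e1 \<le> Suc (a' e1)"
    and rest: "\<forall>v. v \<noteq> e0 \<longrightarrow> v \<noteq> e1 \<longrightarrow> a' v = a v"
  shows "sum a A \<le> sum a' A"
    and "card {v\<in>A. a v = 0} \<le> card {v\<in>A. a' v = 0} + 1"
    and "card {v\<in>A. a' v = 0} < card {v\<in>A. a v = 0} \<Longrightarrow> sum a' A = sum a A + 2"
proof -
  have diff: "int (sum a' A) - int (sum a A) = 1 + (if e1 \<in> A then int (a' e1) - int (a e1) else 0)"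
  proof -
    have "int (sum a' A) - int (sum a A) = (\<Sum>v\<in>A. int (a' v) - int (a v))"
      by (simp add: sum_subtractf)
    also have "\<dots> = (\<Sum>v\<in>A \<inter> {e0, e1}. int (a' v) - int (a v))"
      by (rule sum.mono_neutral_right) (use A rest in auto)
    also have "\<dots> = 1 + (if e1 \<in> A then int (a' e1) - int (a e1) else 0)"
      using A e1 up by (cases "e1 \<in> A") (auto simp: Int_insert_right)
    finally show ?thesis .
  qed
  let ?Z = "{v\<in>A. a v = 0}" and ?Z' = "{v\<in>A. a' v = 0}"
  have zeros: "?Z \<subseteq> insert e1 ?Z'"
  proof
    fix v assume v: "v \<in> ?Z"
    then have "v \<noteq> e0" using up(1) by auto
    then show "v \<in> insert e1 ?Z'" using v rest by auto
  qed
  have finZ: "finite ?Z'" using A(1) by simp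
  show "sum a A \<le> sum a' A" using diff close by (auto split: if_splits simp del: of_nat_sum)
  show "card ?Z \<le> card ?Z' + 1"
  proof -
    have "card ?Z \<le> card (insert e1 ?Z')" using zeros finZ by (intro card_mono) simp_all
    also have "\<dots> \<le> card ?Z' + 1" using finZ by (simp add: card_insert_if)
    finally show ?thesis .
  qed
  show "sum a' A = sum a A + 2" if fewer: "card ?Z' < card ?Z"
  proof -
    have "\<not> ?Z \<subseteq> ?Z'" using fewer card_mono[OF finZ] by (meson not_le)
    then have "e1 \<in> A" "a e1 = 0" "a' e1 = 1" using zeros close by auto
    then show ?thesis using diff by (simp del: of_nat_sum)
  qed
qed

(* One Axelrod update, seen on the edge agreements: the updated edge e0 is mixed and
   gains one agreement; the other edge e1 at the copying vertex moves by at most one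
   (when there is no such edge, e1 = N is an index outside the path); all other edges
   are unchanged. *)
lemma axelrod_step_profile:
  assumes "axelrod_step F N X X'"
  obtains e0 e1 where "e0 < N" "0 < edge_agr F X e0" "edge_agr F X e0 < F"
    "e1 \<noteq> e0" "edge_agr F X' e0 = Suc (edge_agr F X e0)"
    "edge_agr F X' e1 \<le> Suc (edge_agr F X e1)" "edge_agr F X e1 \<le> Suc (edge_agr F X' e1)"
    "\<forall>v. v \<noteq> e0 \<longrightarrow> v \<noteq> e1 \<longrightarrow> edge_agr F X' v = edge_agr F X v"
proof -
  obtain x y i where adj: "adjacent N x y" and pos: "0 < agr F X x y" and i: "i < F"
    and d: "X x i \<noteq> X y i" and X': "X' = X(x := (X x)(i := X y i))"
    using assms unfolding axelrod_step_def by blast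
  define e0 where "e0 = min x y"
  define e1 where "e1 = (if y = Suc x then (if x = 0 then N else x - 1) else x)"
  have xy: "x \<noteq> y" using adj unfolding adjacent_def by auto
  have edge: "edge_agr F Z e0 = agr F Z x y" for Z
    using adj agr_sym[of F Z y x] unfolding e0_def adjacent_def by (auto simp: min_def)
  show thesis
  proof (rule that)
    show "e0 < N" using adj unfolding adjacent_def e0_def by auto
    show "e1 \<noteq> e0" using adj unfolding e1_def e0_def adjacent_def by auto
    show "0 < edge_agr F X e0" "edge_agr F X e0 < F"
      using pos agr_less[of i F X x y, OF i d] edge by simp_all
    show "edge_agr F X' e0 = Suc (edge_agr F X e0)"
      using agr_copy[of x y i F X, OF xy i d] X' edge by simp
    show "edge_agr F X' e1 \<le> Suc (edge_agr F X e1)" "edge_agr F X e1 \<le> Suc (edge_agr F X' e1)"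
      unfolding X' by (rule agr_update_close)+
    show "\<forall>v. v \<noteq> e0 \<longrightarrow> v \<noteq> e1 \<longrightarrow> edge_agr F X' v = edge_agr F X v"
    proof (intro allI impI)
      fix v assume "v \<noteq> e0" "v \<noteq> e1"
      then have "v \<noteq> x" "Suc v \<noteq> x" using adj unfolding e0_def e1_def adjacent_def by auto
      then show "edge_agr F X' v = edge_agr F X v" unfolding X' by (rule agr_update_other)
    qed
  qed
qed

(* Consequences of one update for W and w_0; the last one concerns the configuration
   before the update and is what makes the urn move when W jumps by two. *)
lemma axelrod_step_effect:
  assumes "axelrod_step F N X X'"
  shows "Wtot F N X \<le> Wtot F N X'"
    and "wcount F N X 0 \<le> wcount F N X' 0 + 1"
    and "wcount F N X' 0 < wcount F N X 0 \<Longrightarrow> Wtot F N X' = Wtot F N X + 2"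
    and "Wtot F N X < F * (N - wcount F N X 0)"
proof -
  obtain e0 e1 where e0: "e0 < N" "0 < edge_agr F X e0" "edge_agr F X e0 < F"
    and P: "e1 \<noteq> e0" "edge_agr F X' e0 = Suc (edge_agr F X e0)"
      "edge_agr F X' e1 \<le> Suc (edge_agr F X e1)" "edge_agr F X e1 \<le> Suc (edge_agr F X' e1)"
      "\<forall>v. v \<noteq> e0 \<longrightarrow> v \<noteq> e1 \<longrightarrow> edge_agr F X' v = edge_agr F X v"
    by (rule axelrod_step_profile[OF assms])
  note L = local_perturbation[of "{..<N}" e0 e1 "edge_agr F X" "edge_agr F X'",
                              OF _ _ P(1) e0(2) P(2-5)]
  have zeros: "wcount F N Z 0 = card {v\<in>{..<N}. edge_agr F Z v = 0}" for Z
    by (simp add: wcount_def)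
  show "Wtot F N X \<le> Wtot F N X'" using L(1) e0 by (simp add: Wtot_edge_sum)
  show "wcount F N X 0 \<le> wcount F N X' 0 + 1" using L(2) e0 by (simp only: zeros) simp
  show "Wtot F N X' = Wtot F N X + 2" if "wcount F N X' 0 < wcount F N X 0"
    using L(3) e0 that by (simp add: zeros Wtot_edge_sum)
  show "Wtot F N X < F * (N - wcount F N X 0)" by (rule Wtot_less_if_mixed_edge[OF e0])
qed

definition move_ball :: "(nat \<Rightarrow> nat) \<Rightarrow> nat \<Rightarrow> nat \<Rightarrow> nat \<Rightarrow> nat" where
  "move_ball B p q = B(p := B p - 1, q := B q + 1)"

lemma move_ball_weighted_sum:
  assumes "finite A" "p \<in> A" "q \<in> A" "p \<noteq> q" "0 < B p"
  shows "(\<Sum>k\<in>A. c k * move_ball B p q k) + c p = (\<Sum>k\<in>A. c k * B k) + c q"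
proof -
  have "c k * move_ball B p q k + (if k = p then c k else 0) = c k * B k + (if k = q then c k else 0)"
    for k
  proof -
    have "c p * (B p - 1) + c p = c p * B p"
      using assms(5) by (metis Suc_diff_1 add.commute mult_Suc_right)
    then show ?thesis using assms(4) by (auto simp: move_ball_def)
  qed
  then have "(\<Sum>k\<in>A. c k * move_ball B p q k) + (\<Sum>k\<in>A. if k = p then c k else 0)
      = (\<Sum>k\<in>A. c k * B k) + (\<Sum>k\<in>A. if k = q then c k else 0)"
    by (simp add: sum.distrib[symmetric])
  then show ?thesis using assms(1-3) by simp
qed

lemma urn_step_cases:
  assumes "urn_step F dW B B'"
  obtains "dW \<le> 1" "B' = B"
    | "1 < dW" "\<forall>j. 1 \<le> j \<longrightarrow> j \<le> F - 1 \<longrightarrow> B j = 0" "B' = B"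
    | j where "1 < dW" "1 \<le> j" "j \<le> F - 1" "0 < B j"
        "B' = (let B1 = move_ball B j (Suc j) in if 0 < B1 0 then move_ball B1 0 1 else B1)"
  using assms unfolding urn_step_def move_ball_def Let_def
  by (metis gr0I not_le)

definition urn_invariant :: "nat \<Rightarrow> nat \<Rightarrow> (nat \<Rightarrow> nat \<Rightarrow> nat) \<Rightarrow> (nat \<Rightarrow> nat) \<Rightarrow> bool" where
  "urn_invariant F N X B \<longleftrightarrow>
     B 0 \<le> wcount F N X 0 \<and> (\<Sum>j\<le>F. B j) = N \<and> (\<Sum>j\<le>F. j * B j) \<le> Wtot F N X"

lemma sum_atMost_ends:
  fixes g :: "nat \<Rightarrow> nat"
  assumes "0 < F" "\<And>j. 0 < j \<Longrightarrow> j < F \<Longrightarrow> g j = 0"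
  shows "(\<Sum>j\<le>F. g j) = g 0 + g F"
proof -
  have "(\<Sum>j\<le>F. g j) = (\<Sum>j\<in>{0, F}. g j)"
  proof (rule sum.mono_neutral_right)
    show "\<forall>j\<in>{..F} - {0, F}. g j = 0" using assms(2) by auto
  qed auto
  then show ?thesis using assms(1) by simp
qed

(* Under the invariant, W < F (N - w_0) forces a ball into one of the boxes 1..F-1:
   otherwise the N balls sit in boxes 0 and F, and B_0 <= w_0 would give W >= F B_F
   >= F (N - w_0). *)
lemma urn_middle_ball:
  assumes I: "urn_invariant F N X B" and W: "Wtot F N X < F * (N - wcount F N X 0)"
  shows "\<exists>j. 1 \<le> j \<and> j \<le> F - 1 \<and> 0 < B j"
proof (rule ccontr)
  assume "\<not> ?thesis"
  then have empty: "B j = 0" if "0 < j" "j < F" for j using that by force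
  have F: "0 < F" using W by (cases F) auto
  have balls: "B 0 + B F = N"
    using I sum_atMost_ends[OF F empty] unfolding urn_invariant_def by simp
  have "F * B F \<le> Wtot F N X"
    using I sum_atMost_ends[OF F, of "\<lambda>j. j * B j"] empty unfolding urn_invariant_def by force
  then have "F * B F < F * (N - wcount F N X 0)" using W by linarith
  then have "B F < N - wcount F N X 0" by simp
  then show False using balls I unfolding urn_invariant_def by linarith
qed

lemma urn_invariant_step:
  assumes I: "urn_invariant F N X B" and st: "axelrod_step F N X X'"
    and u: "urn_step F (int (Wtot F N X') - int (Wtot F N X)) B B'"
  shows "urn_invariant F N X' B'"
proof -
  note E = axelrod_step_effect[OF st]
  have I1: "B 0 \<le> wcount F N X 0" and I2: "(\<Sum>j\<le>F. B j) = N"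
    and I3: "(\<Sum>j\<le>F. j * B j) \<le> Wtot F N X"
    using I unfolding urn_invariant_def by auto
  from u show ?thesis
  proof (cases rule: urn_step_cases)
    case 1
    then have "wcount F N X 0 \<le> wcount F N X' 0" using E(3) by force
    then show ?thesis using 1 I1 I2 I3 E(1) unfolding urn_invariant_def by simp
  next
    case 2
    then show ?thesis using urn_middle_ball[OF I E(4)] by auto
  next
    case (3 j)
    define B1 where "B1 = move_ball B j (Suc j)"
    have W': "Wtot F N X + 2 \<le> Wtot F N X'" using 3(1) by simp
    have idx: "j \<in> {..F}" "Suc j \<in> {..F}" "0 \<in> {..F}" "1 \<in> {..F}" using 3 by auto
    have B1_count: "(\<Sum>k\<le>F. B1 k) = N"
      using move_ball_weighted_sum[of "{..F}" j "Suc j" B "\<lambda>_. 1"] idx 3 I2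
      unfolding B1_def by simp
    have B1_weight: "(\<Sum>k\<le>F. k * B1 k) \<le> Wtot F N X + 1"
      using move_ball_weighted_sum[of "{..F}" j "Suc j" B "\<lambda>k. k"] idx 3 I3
      unfolding B1_def by simp
    have B1_zero: "B1 0 = B 0" using 3 unfolding B1_def move_ball_def by simp
    show ?thesis
    proof (cases "0 < B1 0")
      case True
      then have B': "B' = move_ball B1 0 1" using 3 unfolding B1_def by (simp add: Let_def)
      have "(\<Sum>k\<le>F. B' k) = N"
        using move_ball_weighted_sum[of "{..F}" 0 1 B1 "\<lambda>_. 1"] idx True B1_count B' by simp
      moreover have "(\<Sum>k\<le>F. k * B' k) \<le> Wtot F N X'"
        using move_ball_weighted_sum[of "{..F}" 0 1 B1 "\<lambda>k. k"] idx True B1_weight W' B' by simp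
      moreover have "B' 0 \<le> wcount F N X' 0"
        using B' B1_zero I1 E(2) by (simp add: move_ball_def)
      ultimately show ?thesis unfolding urn_invariant_def by simp
    next
      case False
      then have "B' = B1" using 3 unfolding B1_def by (simp add: Let_def)
      then show ?thesis using False B1_count B1_weight W' unfolding urn_invariant_def by simp
    qed
  qed
qed

theorem lemma11:
  fixes F q N :: nat
    and X :: "nat \<Rightarrow> nat \<Rightarrow> nat \<Rightarrow> nat"
    and B :: "nat \<Rightarrow> nat \<Rightarrow> nat"
    and n :: nat
  assumes "F \<ge> 1" and "q \<ge> 1" and "N \<ge> 1"
    and init: "\<forall>v\<le>N. \<forall>i<F. X 0 v i \<in> {1..q}"
    and urn_init: "\<forall>j\<le>F. B 0 j = wcount F N (X 0) j"
    and steps: "\<forall>m<n. axelrod_step F N (X m) (X (Suc m))"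
    and urn: "\<forall>m<n. urn_step F (int (Wtot F N (X (Suc m))) - int (Wtot F N (X m)))
                                (B m) (B (Suc m))"
  shows "B n 0 \<le> wcount F N (X n) 0"
proof -
  have "urn_invariant F N (X m) (B m)" if "m \<le> n" for m
    using that
  proof (induction m)
    case 0
    have "(\<Sum>j\<le>F. B 0 j) = (\<Sum>j\<le>F. wcount F N (X 0) j)"
      and "(\<Sum>j\<le>F. j * B 0 j) = Wtot F N (X 0)"
      using urn_init by (simp_all add: Wtot_def)
    then show ?case using urn_init unfolding urn_invariant_def by (simp add: wcount_total)
  next
    case (Suc m)
    then show ?case using urn_invariant_step steps urn by simp
  qed
  then show ?thesis unfolding urn_invariant_def by simp
qed

end
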